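(* Fix $p\in(0,1)$ and let $P_n$ be the number of distinct directed source-to-sink paths in a random series-parallel network of size $n$ in the Bernoulli model with parameter $p$. Then $\mathbb{E}(P_1)=1$ and for $n\ge2$ $$\mathbb{E}(P_n)=\frac{2p}{n-1}\sum_{k=1}^{n-1}\mathbb{E}(P_k)+\frac{1-p}{n-1}\sum_{k=1}^{n-1}\mathbb{E}(P_k)\mathbb{E}(P_{n-k}),$$ and the generating function $E(z)=\sum_{n\ge1}\mathbb{E}(P_n)z^{n-1}$ is $$E(z)=\begin{cases}\dfrac{1-2p}{(1-p)(1-z)-p(1-z)^{2p}}, & p\neq\tfrac12,\\[2mm] \dfrac{2}{2(1-z)-(1-z)\log\frac{1}{1-z}}, & p=\tfrac12.\end{cases}$$
   Context: Bernoulli model of series-parallel networks with parameter $p\in(0,1)$: at step $1$ the network is a single edge from the source to the sink; at step $n>1$ one of the $n-1$ edges $(x,y)$ is chosen uniformly at random and with probability $p$ a parallel edge $(x,y)$ is added, with probability $1-p$ the edge is subdivided by a new vertex $z$ into $(x,z),(z,y)$. Size $n$ means the network after step $n$ ($n$ edges). Paths are directed paths following edge orientation (towards the sink). *)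

theory Defs
  imports "HOL-Probability.Probability"
begin

text \<open>A network is a list of directed edges (x,y) (multi-edges allowed, so edges are
identified by their index in the list). Source = vertex 0, sink = vertex 1.\<close>

type_synonym network = "(nat \<times> nat) list"

definition subdivide :: "network \<Rightarrow> nat \<Rightarrow> nat \<Rightarrow> network" where
  "subdivide G i z = G[i := (fst (G ! i), z)] @ [(z, snd (G ! i))]"

definition add_parallel :: "network \<Rightarrow> nat \<Rightarrow> network" where
  "add_parallel G i = G @ [G ! i]"

text \<open>The fresh vertex at a subdivision step is labelled length G + 1, which is unused
(a network with m edges uses only labels 0..m).\<close>
fun sp_net :: "real \<Rightarrow> nat \<Rightarrow> network pmf" where
  "sp_net p 0 = return_pmf [(0, 1)]"
| "sp_net p (Suc 0) = return_pmf [(0, 1)]"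
| "sp_net p (Suc (Suc n)) =
     do { G \<leftarrow> sp_net p (Suc n);
          i \<leftarrow> pmf_of_set {..<length G};
          b \<leftarrow> bernoulli_pmf p;
          return_pmf (if b then add_parallel G i else subdivide G i (length G + 1)) }"

text \<open>A directed source-to-sink path, as the nonempty sequence of (indices of) its edges.\<close>
definition is_st_path :: "network \<Rightarrow> nat list \<Rightarrow> bool" where
  "is_st_path G ps \<longleftrightarrow> ps \<noteq> [] \<and> (\<forall>i\<in>set ps. i < length G)
     \<and> fst (G ! hd ps) = 0 \<and> snd (G ! last ps) = 1
     \<and> (\<forall>j. Suc j < length ps \<longrightarrow> snd (G ! (ps ! j)) = fst (G ! (ps ! Suc j)))"

definition num_paths :: "network \<Rightarrow> nat" where
  "num_paths G = card {ps. is_st_path G ps}"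

definition EP :: "real \<Rightarrow> nat \<Rightarrow> real" where
  "EP p n = measure_pmf.expectation (sp_net p n) (\<lambda>G. real (num_paths G))"

end

theory Submission
  imports Defs "HOL-Computational_Algebra.Polynomial" "HOL-Computational_Algebra.Formal_Power_Series"
begin

text \<open>Record a network \<open>G\<close> by its path-length polynomial \<open>F_G(x) = \<Sum> x^|path|\<close>, so that
  \<open>F_G(1)\<close> counts the paths. Choosing an edge uniformly, a path of length \<open>l\<close> is hit with
  probability \<open>l/n\<close>; it is then doubled with probability \<open>p\<close> or lengthened by one with
  probability \<open>1 - p\<close>. Hence the expected polynomial \<open>A_n\<close> satisfies
  \<open>n A_(n+1) = n A_n + D A_n\<close> for the derivation \<open>D = x ((2p - 1) + (1 - p) x) d/dx\<close>.

  Because \<open>D\<close> is a derivation, the series \<open>H(t) = \<Sum> A_(k+1) t^k\<close> satisfies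
  \<open>(1 - t) H' = D H + H\<close>, and the defect \<open>H' - 2p H/(1 - t) - (1 - p) H^2\<close> of the claimed
  quadratic recurrence satisfies the homogeneous equation \<open>(1 - t) G' = D G + 2 G\<close>. As its
  constant term vanishes, so does the defect; evaluating at \<open>x = 1\<close> gives the recurrence for
  \<open>E(P_n)\<close>.

  The recurrence makes the generating function \<open>E\<close> (convergent since \<open>E(P_n) \<le> 2^(n-1)\<close>)
  a solution of the Riccati equation \<open>E' = 2p E/(1 - z) + (1 - p) E^2\<close>. Then \<open>1/E\<close> and the
  reciprocal of the claimed closed form solve the same linear equation with the same initial
  value, so they agree near \<open>0\<close>.\<close>

section \<open>Paths as walks to the sink\<close>

fun sink_walk :: "network \<Rightarrow> nat \<Rightarrow> nat list \<Rightarrow> bool" where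
  "sink_walk G v [] \<longleftrightarrow> v = 1"
| "sink_walk G v (e # es) \<longleftrightarrow> e < length G \<and> fst (G ! e) = v \<and> sink_walk G (snd (G ! e)) es"

lemma sink_walk_iff:
  assumes "ps \<noteq> []"
  shows "sink_walk G v ps \<longleftrightarrow> (\<forall>i\<in>set ps. i < length G) \<and> fst (G ! hd ps) = v
     \<and> snd (G ! last ps) = 1 \<and> (\<forall>j. Suc j < length ps \<longrightarrow> snd (G ! (ps ! j)) = fst (G ! (ps ! Suc j)))"
  using assms
proof (induction ps arbitrary: v)
  case (Cons e es)
  show ?case
  proof (cases "es = []")
    case False
    have "(\<forall>j. Suc j < length (e # es) \<longrightarrow> snd (G ! ((e # es) ! j)) = fst (G ! ((e # es) ! Suc j)))
      \<longleftrightarrow> snd (G ! e) = fst (G ! hd es)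
          \<and> (\<forall>j. Suc j < length es \<longrightarrow> snd (G ! (es ! j)) = fst (G ! (es ! Suc j)))"
    proof -
      have "(\<forall>j. Q j) \<longleftrightarrow> Q 0 \<and> (\<forall>j. Q (Suc j))" for Q :: "nat \<Rightarrow> bool"
        by (metis not0_implies_Suc)
      from this[of "\<lambda>j. Suc j < length (e # es) \<longrightarrow> _ j"] show ?thesis
        using False by (simp add: hd_conv_nth)
    qed
    then show ?thesis using Cons.IH[OF False, of "snd (G ! e)"] False by auto
  qed auto
qed simp

definition paths :: "network \<Rightarrow> nat list set" where
  "paths G = {ps. sink_walk G 0 ps}"

lemma num_paths_eq_card_paths: "num_paths G = card (paths G)"
proof -
  have "is_st_path G ps \<longleftrightarrow> sink_walk G 0 ps" for ps
    by (cases "ps = []") (simp_all add: is_st_path_def sink_walk_iff)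
  then show ?thesis by (simp add: num_paths_def paths_def)
qed

lemma sink_walk_edges_lt: "sink_walk G v ps \<Longrightarrow> e \<in> set ps \<Longrightarrow> e < length G"
  by (induction ps arbitrary: v) auto

text \<open>Bounding the labels by the number of edges makes the label \<open>length G + 1\<close> of a
  subdivision fresh; the ranking \<open>r\<close> makes the network acyclic, so it has finitely many paths.\<close>

definition valid_net :: "network \<Rightarrow> bool" where
  "valid_net G \<longleftrightarrow> G \<noteq> [] \<and> (\<forall>e\<in>set G. fst e \<le> length G \<and> snd e \<le> length G)
     \<and> (\<exists>r::nat \<Rightarrow> real. \<forall>e\<in>set G. r (fst e) < r (snd e))"

lemma sink_walk_distinct:
  assumes "valid_net G" "sink_walk G v ps"
  shows "distinct ps"
proof -
  obtain r :: "nat \<Rightarrow> real" where r: "\<forall>e\<in>set G. r (fst e) < r (snd e)"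
    using assms(1) unfolding valid_net_def by blast
  have "(\<forall>e\<in>set ps. r v \<le> r (fst (G ! e))) \<and> distinct ps" if "sink_walk G v ps" for v ps
    using that
  proof (induction ps arbitrary: v)
    case (Cons e es)
    then have e: "e < length G" "fst (G ! e) = v" "sink_walk G (snd (G ! e)) es" by auto
    have "r v < r (snd (G ! e))" using r e by (metis nth_mem)
    with Cons.IH[OF e(3)] e(2) show ?case by force
  qed simp
  then show ?thesis using assms(2) by blast
qed

lemma finite_paths:
  assumes "valid_net G"
  shows "finite (paths G)"
proof -
  have "paths G \<subseteq> {xs. set xs \<subseteq> {..<length G} \<and> length xs \<le> length G}"
  proof
    fix ps assume "ps \<in> paths G"
    then have w: "sink_walk G 0 ps" by (simp add: paths_def)
    have s: "set ps \<subseteq> {..<length G}" using sink_walk_edges_lt[OF w] by auto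
    have "length ps = card (set ps)" using sink_walk_distinct[OF assms w] by (simp add: distinct_card)
    also have "\<dots> \<le> length G" using card_mono[OF _ s] by simp
    finally show "ps \<in> {xs. set xs \<subseteq> {..<length G} \<and> length xs \<le> length G}" using s by simp
  qed
  then show ?thesis by (rule finite_subset) (simp add: finite_lists_length_le)
qed

lemma valid_net_initial: "valid_net [(0, 1)]"
  unfolding valid_net_def by (auto intro!: exI[where x = real])

lemma paths_initial: "paths [(0, 1)] = {[0]}"
proof -
  have "sink_walk [(0, 1)] 0 ps \<longleftrightarrow> ps = [0]" for ps
    by (cases ps; cases "tl ps") auto
  then show ?thesis by (auto simp: paths_def)
qed

section \<open>Adding a parallel edge\<close>

lemma length_add_parallel [simp]: "length (add_parallel G i) = Suc (length G)"
  by (simp add: add_parallel_def)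

lemma add_parallel_nth_old [simp]: "e < length G \<Longrightarrow> add_parallel G i ! e = G ! e"
  by (simp add: add_parallel_def nth_append)

lemma add_parallel_nth_new [simp]: "add_parallel G i ! length G = G ! i"
  by (simp add: add_parallel_def)

lemma valid_net_add_parallel:
  assumes "valid_net G" "i < length G"
  shows "valid_net (add_parallel G i)"
proof -
  have "set (add_parallel G i) = set G" using assms(2) by (auto simp: add_parallel_def)
  with assms(1) show ?thesis unfolding valid_net_def by (auto intro: le_SucI)
qed

lemma sink_walk_add_parallel:
  "i < length G \<Longrightarrow> sink_walk G v ps \<Longrightarrow> sink_walk (add_parallel G i) v ps"
  by (induction ps arbitrary: v) auto

lemma sink_walk_add_parallel_old:
  "i < length G \<Longrightarrow> sink_walk (add_parallel G i) v ps \<Longrightarrow> length G \<notin> set ps \<Longrightarrow> sink_walk G v ps"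
  by (induction ps arbitrary: v) (auto simp: less_Suc_eq)

lemma sink_walk_add_parallel_merge:
  "i < length G \<Longrightarrow> sink_walk (add_parallel G i) v ps \<Longrightarrow>
     sink_walk G v (map (\<lambda>e. if e = length G then i else e) ps)"
  by (induction ps arbitrary: v) (auto simp: less_Suc_eq)

lemma sink_walk_add_parallel_redirect:
  "i < length G \<Longrightarrow> sink_walk G v ps \<Longrightarrow>
     sink_walk (add_parallel G i) v (map (\<lambda>e. if e = i then length G else e) ps)"
  by (induction ps arbitrary: v) auto

lemma paths_add_parallel:
  assumes "valid_net G" "i < length G"
  shows "paths (add_parallel G i)
     = paths G \<union> map (\<lambda>e. if e = i then length G else e) ` {ps\<in>paths G. i \<in> set ps}"
    (is "_ = _ \<union> map ?redirect ` _")
proof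
  let ?merge = "\<lambda>e. if e = length G then i else e"
  show "paths (add_parallel G i) \<subseteq> paths G \<union> map ?redirect ` {ps\<in>paths G. i \<in> set ps}"
  proof
    fix ps assume "ps \<in> paths (add_parallel G i)"
    then have w: "sink_walk (add_parallel G i) 0 ps" by (simp add: paths_def)
    show "ps \<in> paths G \<union> map ?redirect ` {ps\<in>paths G. i \<in> set ps}"
    proof (cases "length G \<in> set ps")
      case False
      then show ?thesis using sink_walk_add_parallel_old[OF assms(2) w] by (simp add: paths_def)
    next
      case True
      have w': "sink_walk G 0 (map ?merge ps)" using sink_walk_add_parallel_merge[OF assms(2) w] .
      then have inj: "inj_on ?merge (set ps)"
        using sink_walk_distinct[OF assms(1) w'] by (simp add: distinct_map)
      have "i \<notin> set ps"
      proof
        assume "i \<in> set ps"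
        then show False using inj_onD[OF inj, of i "length G"] True assms(2) by simp
      qed
      then have "map ?redirect (map ?merge ps) = ps" unfolding map_map by (auto intro: map_idI)
      moreover have "i \<in> set (map ?merge ps)" using True by force
      ultimately show ?thesis using w' by (force simp: paths_def)
    qed
  qed
next
  show "paths G \<union> map ?redirect ` {ps\<in>paths G. i \<in> set ps} \<subseteq> paths (add_parallel G i)"
    using sink_walk_add_parallel[OF assms(2)] sink_walk_add_parallel_redirect[OF assms(2)]
    by (auto simp: paths_def)
qed

lemma sum_paths_add_parallel:
  fixes w :: "nat \<Rightarrow> 'a::comm_monoid_add"
  assumes "valid_net G" "i < length G"
  shows "(\<Sum>ps\<in>paths (add_parallel G i). w (length ps))
     = (\<Sum>ps\<in>paths G. w (length ps)) + (\<Sum>ps\<in>paths G. if i \<in> set ps then w (length ps) else 0)"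
proof -
  let ?redirect = "\<lambda>e. if e = i then length G else e"
  let ?B = "{ps\<in>paths G. i \<in> set ps}"
  have fin: "finite (paths G)" using finite_paths[OF assms(1)] .
  have old: "\<forall>e\<in>set ps. e < length G" if "ps \<in> paths G" for ps
    using that sink_walk_edges_lt by (auto simp: paths_def)
  have "inj_on (map ?redirect) ?B"
  proof (rule inj_on_inverseI[where g = "map (\<lambda>e. if e = length G then i else e)"])
    fix ps assume "ps \<in> ?B"
    then have "\<forall>e\<in>set ps. e < length G" using old by blast
    then show "map (\<lambda>e. if e = length G then i else e) (map ?redirect ps) = ps"
      unfolding map_map by (intro map_idI) auto
  qed
  moreover have "paths G \<inter> map ?redirect ` ?B = {}"
    using old by force
  ultimately show ?thesis
    unfolding paths_add_parallel[OF assms] using fin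
    by (simp add: sum.union_disjoint sum.reindex sum.inter_filter)
qed

section \<open>Subdividing an edge\<close>

lemma length_subdivide [simp]: "length (subdivide G i z) = Suc (length G)"
  by (simp add: subdivide_def)

lemma subdivide_nth_other [simp]: "e < length G \<Longrightarrow> e \<noteq> i \<Longrightarrow> subdivide G i z ! e = G ! e"
  by (simp add: subdivide_def nth_append)

lemma subdivide_nth_first [simp]: "i < length G \<Longrightarrow> subdivide G i z ! i = (fst (G ! i), z)"
  by (simp add: subdivide_def nth_append)

lemma subdivide_nth_new [simp]: "subdivide G i z ! length G = (z, snd (G ! i))"
  by (simp add: subdivide_def nth_append)

lemma valid_net_subdivide:
  assumes "valid_net G" "i < length G"
  shows "valid_net (subdivide G i (length G + 1))"
proof -
  let ?z = "length G + 1"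
  obtain x y where xy: "G ! i = (x, y)" by fastforce
  have mem: "(x, y) \<in> set G" using assms xy by (metis nth_mem)
  obtain r :: "nat \<Rightarrow> real" where r: "\<forall>e\<in>set G. r (fst e) < r (snd e)"
    using assms(1) unfolding valid_net_def by blast
  have bd: "\<forall>e\<in>set G. fst e \<le> length G \<and> snd e \<le> length G"
    using assms(1) unfolding valid_net_def by blast
  have set_sub: "set (subdivide G i ?z) \<subseteq> insert (x, ?z) (insert (?z, y) (set G))"
    unfolding subdivide_def using set_update_subset_insert[of G i] xy by auto
  define r' where "r' = r(?z := (r x + r y) / 2)"
  have rxy: "r x < r y" using r mem by force
  have xz: "x \<noteq> ?z" "y \<noteq> ?z" using bd mem by force+
  have "\<forall>e\<in>set (subdivide G i ?z). r' (fst e) < r' (snd e)"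
  proof
    fix e assume "e \<in> set (subdivide G i ?z)"
    then consider "e = (x, ?z)" | "e = (?z, y)" | "e \<in> set G" using set_sub by blast
    then show "r' (fst e) < r' (snd e)"
    proof cases
      case 3
      then have "fst e \<noteq> ?z" "snd e \<noteq> ?z" using bd by force+
      then show ?thesis using r 3 by (simp add: r'_def)
    qed (use xz rxy in \<open>auto simp: r'_def\<close>)
  qed
  moreover have "\<forall>e\<in>set (subdivide G i ?z). fst e \<le> Suc (length G) \<and> snd e \<le> Suc (length G)"
    using set_sub bd mem by force
  ultimately show ?thesis unfolding valid_net_def by (auto simp: subdivide_def)
qed

definition insert_after :: "nat \<Rightarrow> nat \<Rightarrow> nat list \<Rightarrow> nat list" where
  "insert_after i m ps = concat (map (\<lambda>e. if e = i then [i, m] else [e]) ps)"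

lemma insert_after_simps [simp]:
  "insert_after i m [] = []"
  "insert_after i m (e # es) = (if e = i then i # m # insert_after i m es else e # insert_after i m es)"
  by (simp_all add: insert_after_def)

lemma filter_insert_after: "m \<notin> set ps \<Longrightarrow> i \<noteq> m \<Longrightarrow> filter (\<lambda>e. e \<noteq> m) (insert_after i m ps) = ps"
  by (induction ps) auto

lemma length_insert_after:
  "distinct ps \<Longrightarrow> length (insert_after i m ps) = length ps + (if i \<in> set ps then 1 else 0)"
  by (induction ps) auto

lemma sink_walk_subdivide:
  "i < length G \<Longrightarrow> sink_walk G v ps \<Longrightarrow> sink_walk (subdivide G i z) v (insert_after i (length G) ps)"
  by (induction ps arbitrary: v) auto

lemma valid_net_label_fresh:
  assumes "valid_net G" "e < length G"
  shows "fst (G ! e) \<noteq> length G + 1" "snd (G ! e) \<noteq> length G + 1"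
  using assms nth_mem unfolding valid_net_def by fastforce+

lemma sink_walk_from_subdivision_vertex:
  assumes "valid_net G" "i < length G"
    and "sink_walk (subdivide G i (length G + 1)) (length G + 1) ps"
  obtains ps' where "ps = length G # ps'" "sink_walk (subdivide G i (length G + 1)) (snd (G ! i)) ps'"
proof (cases ps)
  case (Cons e ps')
  let ?G' = "subdivide G i (length G + 1)"
  from assms(3) Cons have e: "e < Suc (length G)" "fst (?G' ! e) = length G + 1"
    and w: "sink_walk ?G' (snd (?G' ! e)) ps'" by auto
  have "e = length G"
  proof (rule ccontr)
    assume "e \<noteq> length G"
    with e(1) have "e < length G" by simp
    with e(2) show False
      using valid_net_label_fresh[OF assms(1)] assms(2) by (cases "e = i") auto
  qed
  with Cons w show ?thesis by (intro that) auto
qed (use assms in simp)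

lemma sink_walk_subdivide_inv:
  assumes "valid_net G" "i < length G"
  shows "sink_walk (subdivide G i (length G + 1)) v ps \<Longrightarrow> v \<noteq> length G + 1 \<Longrightarrow>
     sink_walk G v (filter (\<lambda>e. e \<noteq> length G) ps)
     \<and> insert_after i (length G) (filter (\<lambda>e. e \<noteq> length G) ps) = ps"
proof (induction ps arbitrary: v rule: length_induct)
  case (1 ps)
  let ?m = "length G" and ?G' = "subdivide G i (length G + 1)"
  note fresh = valid_net_label_fresh[OF assms(1)]
  show ?case
  proof (cases ps)
    case (Cons e es)
    from "1.prems"(1) Cons have e: "e < Suc ?m" "fst (?G' ! e) = v" "sink_walk ?G' (snd (?G' ! e)) es"
      by auto
    consider "e = ?m" | "e = i" | "e < ?m" "e \<noteq> i" using e(1) by linarith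
    then show ?thesis
    proof cases
      case 1
      then show ?thesis using e "1.prems"(2) by simp
    next
      case 2
      then have "sink_walk ?G' (?m + 1) es" "v = fst (G ! i)" using e assms(2) by auto
      then obtain es' where es: "es = ?m # es'" "sink_walk ?G' (snd (G ! i)) es'"
        using sink_walk_from_subdivision_vertex[OF assms] by blast
      then show ?thesis
        using "1.IH" Cons 2 \<open>v = fst (G ! i)\<close> fresh assms(2) by fastforce
    next
      case 3
      then show ?thesis using "1.IH" Cons e fresh by fastforce
    qed
  qed (use "1.prems" in simp)
qed

lemma sum_paths_subdivide:
  fixes w :: "nat \<Rightarrow> 'a::comm_monoid_add"
  assumes "valid_net G" "i < length G"
  shows "(\<Sum>ps\<in>paths (subdivide G i (length G + 1)). w (length ps))
     = (\<Sum>ps\<in>paths G. w (length ps + (if i \<in> set ps then 1 else 0)))"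
proof -
  let ?m = "length G"
  have "paths (subdivide G i (?m + 1)) \<subseteq> insert_after i ?m ` paths G"
  proof
    fix ps assume "ps \<in> paths (subdivide G i (?m + 1))"
    then have "sink_walk G 0 (filter (\<lambda>e. e \<noteq> ?m) ps) \<and> insert_after i ?m (filter (\<lambda>e. e \<noteq> ?m) ps) = ps"
      using sink_walk_subdivide_inv[OF assms] by (simp add: paths_def)
    then show "ps \<in> insert_after i ?m ` paths G" by (force simp: paths_def)
  qed
  moreover have "insert_after i ?m ` paths G \<subseteq> paths (subdivide G i (?m + 1))"
    using sink_walk_subdivide[OF assms(2)] by (auto simp: paths_def)
  ultimately have eq: "paths (subdivide G i (?m + 1)) = insert_after i ?m ` paths G" by blast
  have inj: "inj_on (insert_after i ?m) (paths G)"
  proof (rule inj_on_inverseI[where g = "filter (\<lambda>e. e \<noteq> ?m)"])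
    fix ps assume "ps \<in> paths G"
    then have "?m \<notin> set ps" using sink_walk_edges_lt by (force simp: paths_def)
    then show "filter (\<lambda>e. e \<noteq> ?m) (insert_after i ?m ps) = ps" using filter_insert_after assms(2) by simp
  qed
  show ?thesis
    unfolding eq sum.reindex[OF inj]
    using length_insert_after sink_walk_distinct[OF assms(1)] by (auto simp: paths_def intro!: sum.cong)
qed

section \<open>The path-length polynomial and the derivation \<open>D\<close>\<close>

definition pX :: "real poly" where
  "pX = [:0, 1:]"

definition path_poly :: "network \<Rightarrow> real poly" where
  "path_poly G = (\<Sum>ps\<in>paths G. pX ^ length ps)"

lemma poly_path_poly_1: "poly (path_poly G) 1 = real (num_paths G)"
  by (simp add: path_poly_def poly_sum num_paths_eq_card_paths pX_def)

definition q_poly :: "real \<Rightarrow> real poly" where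
  "q_poly p = [:0, 2 * p - 1, 1 - p:]"

definition qderiv :: "real \<Rightarrow> real poly \<Rightarrow> real poly" where
  "qderiv p a = q_poly p * pderiv a"

lemma qderiv_add: "qderiv p (a + b) = qderiv p a + qderiv p b"
  by (simp add: qderiv_def pderiv_add algebra_simps)

lemma qderiv_diff: "qderiv p (a - b) = qderiv p a - qderiv p b"
  by (simp add: qderiv_def pderiv_diff algebra_simps)

lemma qderiv_mult: "qderiv p (a * b) = qderiv p a * b + a * qderiv p b"
  by (simp add: qderiv_def pderiv_mult algebra_simps)

lemma qderiv_smult: "qderiv p (smult c a) = smult c (qderiv p a)"
  by (simp add: qderiv_def pderiv_smult)

lemma pderiv_sum: "pderiv (sum f S) = (\<Sum>x\<in>S. pderiv (f x))"
  by (induct S rule: infinite_finite_induct) (simp_all add: pderiv_add)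

lemma qderiv_sum: "qderiv p (sum f S) = (\<Sum>x\<in>S. qderiv p (f x))"
  by (simp add: qderiv_def pderiv_sum sum_distrib_left)

lemma qderiv_const [simp]: "qderiv p [:c:] = 0"
  by (simp add: qderiv_def)

lemma qderiv_0 [simp]: "qderiv p 0 = 0"
  by (simp add: qderiv_def)

lemma qderiv_1 [simp]: "qderiv p 1 = 0"
  by (simp add: qderiv_def)

lemma qderiv_of_nat [simp]: "qderiv p (of_nat k) = 0"
  by (simp add: qderiv_def)

text \<open>The expected change of the term \<open>x^l\<close> of one path when one of its \<open>l\<close> edges is chosen.\<close>

definition path_gain :: "real \<Rightarrow> nat \<Rightarrow> real poly" where
  "path_gain p l = smult p (pX ^ l) + smult (1 - p) (pX ^ Suc l - pX ^ l)"

lemma qderiv_pX_power: "qderiv p (pX ^ l) = smult (real l) (path_gain p l)"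
proof (cases l)
  case (Suc k)
  have "pderiv (pX ^ Suc k) = smult (real (Suc k)) (pX ^ k)"
    using pderiv_power[of pX "Suc k"] by (simp add: pX_def pderiv_pCons)
  moreover have "q_poly p = smult (2 * p - 1) pX + smult (1 - p) (pX * pX)"
    by (simp add: q_poly_def pX_def)
  ultimately show ?thesis unfolding qderiv_def path_gain_def Suc
    by (simp add: algebra_simps smult_add_right smult_diff_right)
      (simp only: smult_add_left[symmetric], simp add: algebra_simps)
qed (simp add: qderiv_def)

lemma smult_sum_right: "smult c (sum f S) = (\<Sum>x\<in>S. smult c (f x))"
  by (induct S rule: infinite_finite_induct) (simp_all add: smult_add_right)

lemma sum_lessThan_if_mem_distinct:
  fixes c :: "'a::semiring_1" and m :: nat
  assumes "set ps \<subseteq> {..<m}" "distinct ps"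
  shows "(\<Sum>i<m. if i \<in> set ps then c else 0) = of_nat (length ps) * c"
proof -
  have "(\<Sum>i<m. if i \<in> set ps then c else 0) = (\<Sum>i\<in>{..<m} \<inter> set ps. c)"
    by (rule sum.inter_restrict[symmetric, OF finite_lessThan])
  also have "{..<m} \<inter> set ps = set ps"
    using assms(1) by blast
  finally show ?thesis using assms(2) by (simp add: distinct_card)
qed

lemma path_poly_step_at_edge:
  assumes "valid_net G" "i < length G"
  shows "smult p (path_poly (add_parallel G i)) + smult (1 - p) (path_poly (subdivide G i (length G + 1)))
    = path_poly G + (\<Sum>ps\<in>paths G. if i \<in> set ps then path_gain p (length ps) else 0)"
proof -
  have "path_poly (subdivide G i (length G + 1)) = path_poly G
      + (\<Sum>ps\<in>paths G. if i \<in> set ps then pX ^ Suc (length ps) - pX ^ length ps else 0)"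
    unfolding path_poly_def sum_paths_subdivide[OF assms] sum.distrib[symmetric]
    by (rule sum.cong) auto
  moreover have "path_poly (add_parallel G i)
      = path_poly G + (\<Sum>ps\<in>paths G. if i \<in> set ps then pX ^ length ps else 0)"
    unfolding path_poly_def by (rule sum_paths_add_parallel[OF assms])
  moreover have "smult p (F + A) + smult (1 - p) (F + B) = F + (smult p A + smult (1 - p) B)"
    for F A B :: "real poly"
    by (simp add: poly_eq_iff algebra_simps)
  ultimately show ?thesis
    by (auto simp: path_gain_def smult_sum_right sum.distrib[symmetric] intro!: sum.cong)
qed

lemma sum_path_poly_step:
  assumes "valid_net G"
  shows "(\<Sum>i<length G. smult p (path_poly (add_parallel G i))
            + smult (1 - p) (path_poly (subdivide G i (length G + 1))))
     = smult (real (length G)) (path_poly G) + qderiv p (path_poly G)"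
proof -
  let ?m = "length G" and ?P = "paths G"
  have dist: "distinct ps" and sub: "set ps \<subseteq> {..<?m}" if "ps \<in> ?P" for ps
    using that sink_walk_distinct[OF assms] sink_walk_edges_lt by (auto simp: paths_def)
  have "(\<Sum>i<?m. smult p (path_poly (add_parallel G i))
            + smult (1 - p) (path_poly (subdivide G i (?m + 1))))
      = (\<Sum>i<?m. path_poly G + (\<Sum>ps\<in>?P. if i \<in> set ps then path_gain p (length ps) else 0))"
    by (rule sum.cong[OF refl], rule path_poly_step_at_edge[OF assms]) simp
  also have "\<dots> = smult (real ?m) (path_poly G)
      + (\<Sum>i<?m. \<Sum>ps\<in>?P. if i \<in> set ps then path_gain p (length ps) else 0)"
    by (simp add: sum.distrib of_nat_mult_conv_smult)
  also have "(\<Sum>i<?m. \<Sum>ps\<in>?P. if i \<in> set ps then path_gain p (length ps) else 0)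
      = (\<Sum>ps\<in>?P. smult (real (length ps)) (path_gain p (length ps)))"
    by (subst sum.swap, rule sum.cong[OF refl])
      (simp add: sum_lessThan_if_mem_distinct[OF sub dist] of_nat_mult_conv_smult)
  also have "\<dots> = qderiv p (path_poly G)"
    by (simp add: path_poly_def qderiv_sum qderiv_pX_power)
  finally show ?thesis .
qed

section \<open>Expected path-length polynomial\<close>

definition poly_expectation :: "'a pmf \<Rightarrow> ('a \<Rightarrow> real poly) \<Rightarrow> real poly" where
  "poly_expectation M f = (\<Sum>a\<in>set_pmf M. smult (pmf M a) (f a))"

lemma coeff_poly_expectation:
  "finite (set_pmf M) \<Longrightarrow> coeff (poly_expectation M f) j = measure_pmf.expectation M (\<lambda>a. coeff (f a) j)"
  by (simp add: poly_expectation_def coeff_sum integral_measure_pmf[where A = "set_pmf M"])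

lemma poly_poly_expectation:
  "finite (set_pmf M) \<Longrightarrow> poly (poly_expectation M f) x = measure_pmf.expectation M (\<lambda>a. poly (f a) x)"
  by (simp add: poly_expectation_def poly_sum integral_measure_pmf[where A = "set_pmf M"])

lemma poly_expectation_return [simp]: "poly_expectation (return_pmf x) f = f x"
  by (simp add: poly_expectation_def)

lemma poly_expectation_cong:
  "(\<And>a. a \<in> set_pmf M \<Longrightarrow> f a = g a) \<Longrightarrow> poly_expectation M f = poly_expectation M g"
  by (simp add: poly_expectation_def)

lemma poly_expectation_bind:
  assumes "finite (set_pmf M)" "\<And>a. a \<in> set_pmf M \<Longrightarrow> finite (set_pmf (N a))"
  shows "poly_expectation (M \<bind> N) f = poly_expectation M (\<lambda>a. poly_expectation (N a) f)"
proof (rule poly_eqI)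
  fix j
  have "finite (set_pmf (M \<bind> N))" using assms by (simp add: set_bind_pmf)
  then have "coeff (poly_expectation (M \<bind> N) f) j
      = (\<Sum>a\<in>set_pmf M. pmf M a * measure_pmf.expectation (N a) (\<lambda>b. coeff (f b) j))"
    using assms by (simp add: coeff_poly_expectation pmf_expectation_bind[where A = "set_pmf M"])
  also have "\<dots> = (\<Sum>a\<in>set_pmf M. pmf M a * coeff (poly_expectation (N a) f) j)"
    using assms(2) by (simp add: coeff_poly_expectation)
  also have "\<dots> = coeff (poly_expectation M (\<lambda>a. poly_expectation (N a) f)) j"
    by (simp only: poly_expectation_def[of M] coeff_sum coeff_smult)
  finally show "coeff (poly_expectation (M \<bind> N) f) j = coeff (poly_expectation M (\<lambda>a. poly_expectation (N a) f)) j" .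
qed

lemma poly_expectation_add_smult_qderiv:
  "poly_expectation M (\<lambda>a. f a + smult c (qderiv p (f a)))
     = poly_expectation M f + smult c (qderiv p (poly_expectation M f))"
  by (simp add: poly_expectation_def smult_add_right sum.distrib qderiv_sum qderiv_smult
      smult_sum_right mult.commute)

definition sp_step :: "real \<Rightarrow> network \<Rightarrow> network pmf" where
  "sp_step p G = pmf_of_set {..<length G} \<bind> (\<lambda>i. bernoulli_pmf p \<bind>
      (\<lambda>b. return_pmf (if b then add_parallel G i else subdivide G i (length G + 1))))"

lemma sp_net_Suc_Suc: "sp_net p (Suc (Suc n)) = sp_net p (Suc n) \<bind> sp_step p"
  unfolding sp_step_def[abs_def] by simp

lemma set_pmf_sp_step:
  assumes "G \<noteq> []"
  shows "set_pmf (sp_step p G)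
    \<subseteq> (\<lambda>i. add_parallel G i) ` {..<length G} \<union> (\<lambda>i. subdivide G i (length G + 1)) ` {..<length G}"
proof -
  have "{..<length G} \<noteq> {}" using assms by auto
  then show ?thesis by (auto simp: sp_step_def set_bind_pmf set_pmf_of_set split: if_splits)
qed

lemma finite_set_pmf_sp_step: "G \<noteq> [] \<Longrightarrow> finite (set_pmf (sp_step p G))"
  by (rule finite_subset[OF set_pmf_sp_step]) auto

lemma sp_net_support:
  "finite (set_pmf (sp_net p (Suc n)))
     \<and> (\<forall>G\<in>set_pmf (sp_net p (Suc n)). valid_net G \<and> length G = Suc n)"
proof (induction n)
  case 0
  then show ?case using valid_net_initial by simp
next
  case (Suc n)
  then have ne: "G \<noteq> []" if "G \<in> set_pmf (sp_net p (Suc n))" for G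
    using that by auto
  have "valid_net G' \<and> length G' = Suc (Suc n)" if "G' \<in> set_pmf (sp_net p (Suc (Suc n)))" for G'
  proof -
    from that obtain G where G: "G \<in> set_pmf (sp_net p (Suc n))" "G' \<in> set_pmf (sp_step p G)"
      unfolding sp_net_Suc_Suc set_bind_pmf by auto
    with set_pmf_sp_step[OF ne[OF G(1)]] obtain i where
      "i < length G" "G' = add_parallel G i \<or> G' = subdivide G i (length G + 1)" by blast
    moreover have "valid_net G" "length G = Suc n" using Suc G(1) by auto
    ultimately show ?thesis
      using valid_net_add_parallel[of G i] valid_net_subdivide[of G i] by auto
  qed
  moreover have "finite (set_pmf (sp_net p (Suc (Suc n))))"
    unfolding sp_net_Suc_Suc set_bind_pmf using Suc finite_set_pmf_sp_step ne by auto
  ultimately show ?case by blast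
qed

lemma expectation_sp_step:
  assumes "G \<noteq> []" "0 \<le> p" "p \<le> 1"
  shows "measure_pmf.expectation (sp_step p G) h =
    (\<Sum>i<length G. p * h (add_parallel G i) + (1 - p) * h (subdivide G i (length G + 1))) / real (length G)"
proof -
  let ?choice = "\<lambda>i. bernoulli_pmf p \<bind>
      (\<lambda>b. return_pmf (if b then add_parallel G i else subdivide G i (length G + 1)))"
  have "finite (set_pmf (?choice i))" for i
    by (simp add: set_bind_pmf)
  moreover have "measure_pmf.expectation (?choice i) h
      = p * h (add_parallel G i) + (1 - p) * h (subdivide G i (length G + 1))" for i
    using assms by (subst pmf_expectation_bind[where A = "{True, False}"]) auto
  ultimately show ?thesis
    using assms unfolding sp_step_def
    by (subst pmf_expectation_bind_pmf_of_set) (auto simp: sum_divide_distrib divide_inverse mult.commute sum_distrib_left)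
qed

lemma poly_expectation_sp_step:
  assumes "valid_net G" "0 \<le> p" "p \<le> 1"
  shows "poly_expectation (sp_step p G) path_poly
    = path_poly G + smult (1 / real (length G)) (qderiv p (path_poly G))"
proof (rule poly_eqI)
  fix j
  have ne: "G \<noteq> []" using assms(1) by (simp add: valid_net_def)
  have "coeff (poly_expectation (sp_step p G) path_poly) j
      = coeff (smult (1 / real (length G)) (\<Sum>i<length G. smult p (path_poly (add_parallel G i))
          + smult (1 - p) (path_poly (subdivide G i (length G + 1))))) j"
    by (simp add: coeff_poly_expectation finite_set_pmf_sp_step[OF ne] expectation_sp_step[OF ne assms(2,3)]
        coeff_sum divide_inverse mult.commute)
  also have "\<dots> = coeff (path_poly G + smult (1 / real (length G)) (qderiv p (path_poly G))) j"
    using ne unfolding sum_path_poly_step[OF assms(1)] by (simp add: smult_add_right)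
  finally show "coeff (poly_expectation (sp_step p G) path_poly) j
      = coeff (path_poly G + smult (1 / real (length G)) (qderiv p (path_poly G))) j" .
qed

definition mean_path_poly :: "real \<Rightarrow> nat \<Rightarrow> real poly" where
  "mean_path_poly p n = poly_expectation (sp_net p n) path_poly"

lemma mean_path_poly_1: "mean_path_poly p (Suc 0) = pX"
  using paths_initial by (simp add: mean_path_poly_def path_poly_def)

lemma mean_path_poly_Suc_Suc:
  assumes "0 \<le> p" "p \<le> 1"
  shows "of_nat (Suc n) * mean_path_poly p (Suc (Suc n))
    = of_nat (Suc n) * mean_path_poly p (Suc n) + qderiv p (mean_path_poly p (Suc n))"
proof -
  let ?M = "sp_net p (Suc n)"
  have M: "finite (set_pmf ?M)" "\<And>G. G \<in> set_pmf ?M \<Longrightarrow> valid_net G \<and> length G = Suc n"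
    using sp_net_support[of p n] by auto
  then have ne: "G \<noteq> []" if "G \<in> set_pmf ?M" for G
    using M(2)[OF that] by auto
  have "mean_path_poly p (Suc (Suc n)) = poly_expectation ?M (\<lambda>G. poly_expectation (sp_step p G) path_poly)"
    unfolding mean_path_poly_def sp_net_Suc_Suc
    by (rule poly_expectation_bind[OF M(1) finite_set_pmf_sp_step[OF ne]])
  also have "\<dots> = poly_expectation ?M (\<lambda>G. path_poly G + smult (1 / real (Suc n)) (qderiv p (path_poly G)))"
    by (rule poly_expectation_cong) (use M(2) poly_expectation_sp_step assms in auto)
  also have "\<dots> = mean_path_poly p (Suc n) + smult (1 / real (Suc n)) (qderiv p (mean_path_poly p (Suc n)))"
    unfolding mean_path_poly_def by (rule poly_expectation_add_smult_qderiv)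
  finally show ?thesis
    by (simp add: distrib_left of_nat_mult_conv_smult del: of_nat_Suc)
qed

lemma EP_eq_poly_mean_path_poly: "EP p (Suc n) = poly (mean_path_poly p (Suc n)) 1"
  using sp_net_support[of p n]
  by (simp add: EP_def mean_path_poly_def poly_poly_expectation poly_path_poly_1)

lemma EP_1: "EP p 1 = 1"
  using EP_eq_poly_mean_path_poly[of p 0] by (simp add: mean_path_poly_1 pX_def)

section \<open>The quadratic recurrence\<close>

definition fps_qderiv :: "real \<Rightarrow> real poly fps \<Rightarrow> real poly fps" where
  "fps_qderiv p F = Abs_fps (\<lambda>n. qderiv p (fps_nth F n))"

lemma fps_qderiv_nth [simp]: "fps_nth (fps_qderiv p F) n = qderiv p (fps_nth F n)"
  by (simp add: fps_qderiv_def)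

lemma fps_qderiv_diff: "fps_qderiv p (F - G) = fps_qderiv p F - fps_qderiv p G"
  by (rule fps_ext) (simp add: qderiv_diff)

lemma fps_qderiv_mult: "fps_qderiv p (F * G) = fps_qderiv p F * G + F * fps_qderiv p G"
  by (rule fps_ext) (simp add: fps_mult_nth qderiv_sum qderiv_mult sum.distrib)

lemma fps_qderiv_const: "fps_qderiv p (fps_const [:c:]) = 0"
  by (rule fps_ext) simp

lemma fps_qderiv_fps_deriv: "fps_qderiv p (fps_deriv F) = fps_deriv (fps_qderiv p F)"
  by (rule fps_ext) (simp add: qderiv_mult qderiv_add)

definition geo_fps :: "real poly fps" where
  "geo_fps = Abs_fps (\<lambda>_. 1)"

lemma fps_qderiv_geo_fps: "fps_qderiv p geo_fps = 0"
  by (rule fps_ext) (simp add: geo_fps_def)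

lemma one_minus_fps_X_mult_nth:
  "fps_nth ((1 - fps_X) * (F :: real poly fps)) n = fps_nth F n - (if n = 0 then 0 else fps_nth F (n - 1))"
proof -
  have "(1 - fps_X) * F = F - fps_X * F" by (simp add: algebra_simps)
  then show ?thesis by (simp only: fps_sub_nth fps_X_mult_nth)
qed

lemma one_minus_fps_X_mult_geo_fps: "(1 - fps_X) * geo_fps = 1"
  by (rule fps_ext) (simp add: one_minus_fps_X_mult_nth geo_fps_def)

lemma one_minus_fps_X_mult_deriv_geo_fps: "(1 - fps_X) * fps_deriv geo_fps = geo_fps"
  by (rule fps_ext) (auto simp: one_minus_fps_X_mult_nth geo_fps_def algebra_simps)

text \<open>Used with \<open>y = 1 - X\<close>, \<open>g\<close> the geometric series, \<open>h\<close> the series of mean polynomials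
  and \<open>e = D h\<close>: the hypotheses are the differential equations of \<open>g\<close>, \<open>g'\<close>, \<open>h\<close> and \<open>h'\<close>, and
  the conclusion is the equation \<open>y G' = D G + 2 G\<close> for \<open>G = h' - a h g - b h\<^sup>2\<close>.\<close>

lemma defect_identity:
  fixes y g g1 h h1 h2 e e1 a b :: "'a::comm_ring_1"
  assumes "y * g = 1" "y * g1 = g" "y * h1 = e + h" "y * h2 = e1 + 2 * h1"
  shows "y * (h2 - a * (h1 * g + h * g1) - b * (h1 * h + h * h1))
    = (e1 - a * e * g - b * (e * h + h * e)) + 2 * (h1 - a * h * g - b * h * h)"
proof -
  have "y * (h2 - a * (h1 * g + h * g1) - b * (h1 * h + h * h1))
      = y * h2 - a * (y * h1) * g - a * h * (y * g1) - 2 * b * h * (y * h1)"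
    by (simp add: algebra_simps)
  also have "\<dots> = (e1 + 2 * h1) - a * (e + h) * g - a * h * g - 2 * b * h * (e + h)"
    by (simp only: assms)
  also have "\<dots> = (e1 - a * e * g - b * (e * h + h * e)) + 2 * (h1 - a * h * g - b * h * h)"
    by (simp add: algebra_simps)
  finally show ?thesis .
qed

context
  fixes p :: real
  assumes p_prob: "0 \<le> p" "p \<le> 1"
begin

definition mean_fps :: "real poly fps" where
  "mean_fps = Abs_fps (\<lambda>k. mean_path_poly p (Suc k))"

definition recurrence_defect :: "real poly fps" where
  "recurrence_defect = fps_deriv mean_fps - fps_const [:2 * p:] * mean_fps * geo_fps
     - fps_const [:1 - p:] * mean_fps * mean_fps"

lemma mean_fps_nth [simp]: "fps_nth mean_fps k = mean_path_poly p (Suc k)"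
  by (simp add: mean_fps_def)

lemma mean_fps_ode: "(1 - fps_X) * fps_deriv mean_fps = fps_qderiv p mean_fps + mean_fps"
proof (rule fps_ext)
  fix n
  have "of_nat (Suc n) * mean_path_poly p (Suc (Suc n)) - of_nat n * mean_path_poly p (Suc n)
      = qderiv p (mean_path_poly p (Suc n)) + mean_path_poly p (Suc n)"
    unfolding mean_path_poly_Suc_Suc[OF p_prob] by (simp add: algebra_simps)
  then show "fps_nth ((1 - fps_X) * fps_deriv mean_fps) n = fps_nth (fps_qderiv p mean_fps + mean_fps) n"
    by (cases n) (simp_all add: one_minus_fps_X_mult_nth fps_deriv_nth del: of_nat_Suc)
qed

lemma mean_fps_ode_deriv:
  "(1 - fps_X) * fps_deriv (fps_deriv mean_fps) = fps_deriv (fps_qderiv p mean_fps) + 2 * fps_deriv mean_fps"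
proof -
  have "fps_deriv ((1 - fps_X) * fps_deriv mean_fps) = fps_deriv (fps_qderiv p mean_fps + mean_fps)"
    by (simp only: mean_fps_ode)
  then show ?thesis by (simp add: fps_deriv_mult fps_deriv_fps_X algebra_simps)
qed

lemma recurrence_defect_ode:
  "(1 - fps_X) * fps_deriv recurrence_defect = fps_qderiv p recurrence_defect + 2 * recurrence_defect"
proof -
  let ?a = "fps_const [:2 * p:]" and ?b = "fps_const [:1 - p:]"
  have d: "fps_deriv recurrence_defect = fps_deriv (fps_deriv mean_fps)
      - ?a * (fps_deriv mean_fps * geo_fps + mean_fps * fps_deriv geo_fps)
      - ?b * (fps_deriv mean_fps * mean_fps + mean_fps * fps_deriv mean_fps)"
    unfolding recurrence_defect_def by (simp add: fps_deriv_mult algebra_simps)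
  have qd: "fps_qderiv p recurrence_defect = fps_deriv (fps_qderiv p mean_fps)
      - ?a * fps_qderiv p mean_fps * geo_fps
      - ?b * (fps_qderiv p mean_fps * mean_fps + mean_fps * fps_qderiv p mean_fps)"
    unfolding recurrence_defect_def
    by (simp only: fps_qderiv_diff fps_qderiv_mult fps_qderiv_const fps_qderiv_geo_fps fps_qderiv_fps_deriv)
      (simp add: algebra_simps)
  have r: "recurrence_defect = fps_deriv mean_fps - ?a * mean_fps * geo_fps - ?b * mean_fps * mean_fps"
    by (simp add: recurrence_defect_def)
  show ?thesis
    unfolding d qd r[symmetric]
    by (rule defect_identity[where a = ?a and b = ?b, OF one_minus_fps_X_mult_geo_fps
        one_minus_fps_X_mult_deriv_geo_fps mean_fps_ode mean_fps_ode_deriv, unfolded r[symmetric]])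
qed

lemma recurrence_defect_eq_0: "recurrence_defect = 0"
proof (rule fps_ext)
  fix n
  show "fps_nth recurrence_defect n = fps_nth 0 n"
  proof (induction n)
    case 0
    have "mean_path_poly p 2 = pX + q_poly p"
      using mean_path_poly_Suc_Suc[OF p_prob, of 0]
      by (simp add: mean_path_poly_1 qderiv_def numeral_2_eq_2 pX_def pderiv_pCons)
    then show ?case
      by (simp add: recurrence_defect_def geo_fps_def fps_deriv_nth mean_path_poly_1 pX_def q_poly_def
          numeral_2_eq_2)
  next
    case (Suc n)
    have "fps_nth ((1 - fps_X) * fps_deriv recurrence_defect) n = fps_nth (fps_qderiv p recurrence_defect + 2 * recurrence_defect) n"
      by (simp only: recurrence_defect_ode)
    then have "of_nat (Suc n) * fps_nth recurrence_defect (Suc n) = 0"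
      using Suc by (auto simp: one_minus_fps_X_mult_nth fps_deriv_nth split: if_splits simp del: of_nat_Suc)
    then show ?case by (simp add: of_nat_mult_conv_smult del: of_nat_Suc)
  qed
qed

lemma EP_quadratic_recurrence:
  "real (Suc n) * EP p (Suc (Suc n)) = 2 * p * (\<Sum>i\<le>n. EP p (Suc i))
     + (1 - p) * (\<Sum>i\<le>n. EP p (Suc i) * EP p (Suc (n - i)))"
proof -
  have defect: "recurrence_defect = fps_deriv mean_fps - fps_const [:2 * p:] * (mean_fps * geo_fps)
      - fps_const [:1 - p:] * (mean_fps * mean_fps)"
    by (simp add: recurrence_defect_def mult.assoc)
  have "fps_nth recurrence_defect n = 0"
    by (simp add: recurrence_defect_eq_0)
  then have "fps_nth (fps_deriv mean_fps) n - [:2 * p:] * fps_nth (mean_fps * geo_fps) n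
      - [:1 - p:] * fps_nth (mean_fps * mean_fps) n = 0"
    unfolding defect by (simp only: fps_sub_nth fps_mult_left_const_nth)
  then have "of_nat (Suc n) * mean_path_poly p (Suc (Suc n)) = [:2 * p:] * (\<Sum>i\<le>n. mean_path_poly p (Suc i))
     + [:1 - p:] * (\<Sum>i\<le>n. mean_path_poly p (Suc i) * mean_path_poly p (Suc (n - i)))"
    by (simp add: fps_mult_nth fps_deriv_nth geo_fps_def atLeast0AtMost del: of_nat_Suc)
  then have "poly (of_nat (Suc n) * mean_path_poly p (Suc (Suc n))) 1
      = poly ([:2 * p:] * (\<Sum>i\<le>n. mean_path_poly p (Suc i))
          + [:1 - p:] * (\<Sum>i\<le>n. mean_path_poly p (Suc i) * mean_path_poly p (Suc (n - i)))) 1"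
    by (rule arg_cong)
  then show ?thesis by (simp add: EP_eq_poly_mean_path_poly poly_sum del: of_nat_Suc)
qed

lemma EP_recurrence:
  assumes "2 \<le> n"
  shows "EP p n = 2 * p / real (n - 1) * (\<Sum>k=1..n-1. EP p k)
    + (1 - p) / real (n - 1) * (\<Sum>k=1..n-1. EP p k * EP p (n - k))"
proof -
  obtain m where n: "n = Suc (Suc m)" using assms by (metis add_2_eq_Suc le_Suc_ex)
  have "(\<Sum>k=1..n-1. EP p k) = (\<Sum>i\<le>m. EP p (Suc i))"
    unfolding n using sum.atLeast_Suc_atMost_Suc_shift[of "EP p" 0 m] by (simp add: atLeast0AtMost)
  moreover have "(\<Sum>k=1..n-1. EP p k * EP p (n - k)) = (\<Sum>i\<le>m. EP p (Suc i) * EP p (Suc (m - i)))"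
    unfolding n using sum.atLeast_Suc_atMost_Suc_shift[of "\<lambda>k. EP p k * EP p (Suc (Suc m) - k)" 0 m]
    by (simp add: atLeast0AtMost Suc_diff_le)
  ultimately show ?thesis
    using EP_quadratic_recurrence[of m] unfolding n
    by (simp add: field_simps del: of_nat_Suc)
qed

end

section \<open>The generating function\<close>

locale quadratic_recurrence =
  fixes e :: "nat \<Rightarrow> real" and p :: real
  assumes p_gt_0: "0 < p" and p_lt_1: "p < 1" and e_0: "e 0 = 1"
    and e_Suc: "\<And>n. real (Suc n) * e (Suc n)
      = 2 * p * (\<Sum>i\<le>n. e i) + (1 - p) * (\<Sum>i\<le>n. e i * e (n - i))"
begin

lemma e_nonneg: "0 \<le> e k"
proof (induction k rule: less_induct)
  case (less k)
  show ?case
  proof (cases k)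
    case (Suc n)
    have "0 \<le> (\<Sum>i\<le>n. e i)" "0 \<le> (\<Sum>i\<le>n. e i * e (n - i))"
      using less Suc by (auto intro!: sum_nonneg)
    then have "0 \<le> real (Suc n) * e (Suc n)"
      unfolding e_Suc using p_lt_1 p_gt_0 by simp
    then show ?thesis using Suc by (simp add: zero_le_mult_iff del: of_nat_Suc)
  qed (simp add: e_0)
qed

lemma e_le_two_power: "e k \<le> 2 ^ k"
proof (induction k rule: less_induct)
  case (less k)
  show ?case
  proof (cases k)
    case (Suc n)
    have IH: "e i \<le> 2 ^ i" if "i \<le> n" for i using less Suc that by auto
    have "e i \<le> 2 ^ n" if "i \<le> n" for i
      using IH[OF that] power_increasing[OF that, of "2::real"] by linarith
    then have sum_le: "(\<Sum>i\<le>n. e i) \<le> real (Suc n) * 2 ^ n"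
      using sum_bounded_above[of "{..n}" e "2 ^ n"] by simp
    have "e i * e (n - i) \<le> 2 ^ i * 2 ^ (n - i)" if "i \<le> n" for i
      using IH that by (intro mult_mono) (auto simp: e_nonneg)
    then have "e i * e (n - i) \<le> 2 ^ n" if "i \<le> n" for i
      using that by (simp add: power_add[symmetric])
    then have conv_le: "(\<Sum>i\<le>n. e i * e (n - i)) \<le> real (Suc n) * 2 ^ n"
      using sum_bounded_above[of "{..n}" "\<lambda>i. e i * e (n - i)" "2 ^ n"] by simp
    have "real (Suc n) * e (Suc n) \<le> 2 * p * (real (Suc n) * 2 ^ n) + (1 - p) * (real (Suc n) * 2 ^ n)"
      unfolding e_Suc using sum_le conv_le p_gt_0 p_lt_1 by (intro add_mono mult_left_mono) auto
    also have "\<dots> = (1 + p) * (real (Suc n) * 2 ^ n)"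
      by (simp add: algebra_simps)
    also have "\<dots> \<le> 2 * (real (Suc n) * 2 ^ n)"
      using p_lt_1 by (intro mult_right_mono) auto
    also have "\<dots> = real (Suc n) * 2 ^ Suc n"
      by simp
    finally show ?thesis using Suc by (simp del: of_nat_Suc)
  qed (simp add: e_0)
qed

lemma summable_norm_e_power:
  assumes "\<bar>z\<bar> < 1/2"
  shows "summable (\<lambda>k. norm (e k * z ^ k))"
proof (rule summable_comparison_test)
  have "norm (norm (e n * z ^ n)) \<le> (2 * \<bar>z\<bar>) ^ n" for n
  proof -
    have "norm (norm (e n * z ^ n)) = e n * \<bar>z\<bar> ^ n" by (simp add: e_nonneg abs_mult power_abs)
    also have "\<dots> \<le> 2 ^ n * \<bar>z\<bar> ^ n" using e_le_two_power by (intro mult_right_mono) auto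
    finally show ?thesis by (simp add: power_mult_distrib)
  qed
  then show "\<exists>N. \<forall>n\<ge>N. norm (norm (e n * z ^ n)) \<le> (2 * \<bar>z\<bar>) ^ n" by blast
  show "summable (\<lambda>n. (2 * \<bar>z\<bar>) ^ n)" using assms by (intro summable_geometric) auto
qed

lemma summable_e_power: "\<bar>z\<bar> < 1/2 \<Longrightarrow> summable (\<lambda>k. e k * z ^ k)"
  by (rule summable_norm_cancel[OF summable_norm_e_power])

definition gf :: "real \<Rightarrow> real" where
  "gf z = (\<Sum>k. e k * z ^ k)"

lemma gf_0: "gf 0 = 1"
  using powser_zero[of e] e_0 by (simp add: gf_def)

lemma Cauchy_product_e_power:
  assumes "\<bar>z\<bar> < 1/2" "summable (\<lambda>k. norm (c k * z ^ k))"
  shows "(\<lambda>k. (\<Sum>i\<le>k. e i * c (k - i)) * z ^ k) sums (gf z * (\<Sum>k. c k * z ^ k))"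
proof -
  have "(\<Sum>i\<le>k. (e i * z ^ i) * (c (k - i) * z ^ (k - i))) = (\<Sum>i\<le>k. e i * c (k - i) * z ^ k)" for k
    by (intro sum.cong) (simp_all add: mult_ac power_add[symmetric])
  then have "(\<Sum>i\<le>k. (e i * z ^ i) * (c (k - i) * z ^ (k - i))) = (\<Sum>i\<le>k. e i * c (k - i)) * z ^ k" for k
    by (simp add: sum_distrib_right)
  then show ?thesis
    using Cauchy_product_sums[OF summable_norm_e_power[OF assms(1)] assms(2)] by (simp add: gf_def)
qed

lemma gf_riccati:
  assumes z: "\<bar>z\<bar> < 1/2"
  shows "(gf has_real_derivative (2 * p * gf z / (1 - z) + (1 - p) * gf z ^ 2)) (at z)"
proof -
  define K where "K = (\<bar>z\<bar> + 1/2) / 2"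
  have K: "\<bar>K\<bar> < 1/2" "norm z < norm K" using z by (auto simp: K_def)
  have d: "(gf has_real_derivative (\<Sum>n. diffs e n * z ^ n)) (at z)"
    unfolding gf_def by (rule termdiffs_strong[OF summable_e_power[OF K(1)] K(2)])
  have z1: "norm z < 1" using z by simp
  have "(\<lambda>k. (\<Sum>i\<le>k. e i * 1) * z ^ k) sums (gf z * (\<Sum>k. 1 * z ^ k))"
    by (rule Cauchy_product_e_power[OF z]) (use z1 in \<open>simp add: power_abs summable_geometric_iff\<close>)
  moreover have "(\<Sum>k. z ^ k) = 1 / (1 - z)"
    using geometric_sums[OF z1] by (simp add: sums_iff)
  ultimately have partial_sums: "(\<lambda>k. (\<Sum>i\<le>k. e i) * z ^ k) sums (gf z / (1 - z))"
    by simp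
  have convolution: "(\<lambda>k. (\<Sum>i\<le>k. e i * e (k - i)) * z ^ k) sums (gf z * gf z)"
    using Cauchy_product_e_power[OF z summable_norm_e_power[OF z]] by (simp add: gf_def)
  have "diffs e n * z ^ n = 2 * p * ((\<Sum>i\<le>n. e i) * z ^ n) + (1 - p) * ((\<Sum>i\<le>n. e i * e (n - i)) * z ^ n)"
    for n
  proof -
    have "diffs e n * z ^ n = (real (Suc n) * e (Suc n)) * z ^ n" by (simp add: diffs_def)
    then show ?thesis by (simp only: e_Suc) (simp add: algebra_simps)
  qed
  then have "(\<lambda>n. diffs e n * z ^ n) sums (2 * p * (gf z / (1 - z)) + (1 - p) * (gf z * gf z))"
    using sums_add[OF sums_mult[OF partial_sums] sums_mult[OF convolution]] by simp
  then show ?thesis using d by (simp add: sums_iff power2_eq_square)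
qed

lemma gf_pos_near_0: "\<exists>r>0. r \<le> 1/2 \<and> (\<forall>z. \<bar>z\<bar> < r \<longrightarrow> gf z > 0)"
proof -
  have "isCont gf 0" using gf_riccati[of 0] by (intro DERIV_isCont) auto
  then obtain d where d: "d > 0" "\<And>x. dist x 0 < d \<Longrightarrow> dist (gf x) (gf 0) < 1"
    unfolding continuous_at_eps_delta using zero_less_one by blast
  show ?thesis
  proof (intro exI conjI allI impI)
    fix z assume "\<bar>z\<bar> < min d (1/2)"
    then have "\<bar>gf z - 1\<bar> < 1" using d gf_0 by (simp add: dist_real_def)
    then show "gf z > 0" by linarith
  qed (use d in auto)
qed

definition gf_recip :: "real \<Rightarrow> real" where
  "gf_recip z = (if p \<noteq> 1/2 then ((1 - p) * (1 - z) - p * (1 - z) powr (2 * p)) / (1 - 2 * p)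
     else (2 * (1 - z) + (1 - z) * ln (1 - z)) / 2)"

lemma gf_recip_0: "gf_recip 0 = 1"
  using p_gt_0 p_lt_1 by (auto simp: gf_recip_def field_simps)

lemma has_real_derivative_one_minus_powr:
  assumes "z < 1"
  shows "((\<lambda>z. (1 - z) powr a) has_real_derivative ((1 - z) powr a * (- a / (1 - z)))) (at z)"
proof -
  have "((\<lambda>z. (1 - z) powr ((\<lambda>_. a) z)) has_real_derivative
      (1 - z) powr a * (0 * ln (1 - z) + (-1) * a / (1 - z))) (at z)"
    by (rule DERIV_powr) (use assms in \<open>auto intro!: derivative_eq_intros\<close>)
  then show ?thesis by simp
qed

lemma gf_recip_deriv:
  assumes "z < 1"
  shows "(gf_recip has_real_derivative (-2 * p * gf_recip z / (1 - z) - (1 - p))) (at z)"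
proof (cases "p = 1/2")
  case False
  have f: "gf_recip = (\<lambda>z. ((1 - p) * (1 - z) - p * (1 - z) powr (2 * p)) / (1 - 2 * p))"
    using False by (auto simp: gf_recip_def)
  have key: "((1 - p) * (-1) - p * (w * (- (2 * p) / y))) / (1 - 2 * p)
      = -2 * p * (((1 - p) * y - p * w) / (1 - 2 * p)) / y - (1 - p)" if "y \<noteq> 0" for y w :: real
    using that False by (simp add: field_simps)
  have D: "((\<lambda>z. ((1 - p) * (1 - z) - p * (1 - z) powr (2 * p)) / (1 - 2 * p)) has_real_derivative
       ((1 - p) * (-1) - p * ((1 - z) powr (2 * p) * (- (2 * p) / (1 - z)))) / (1 - 2 * p)) (at z)"
    by (intro DERIV_cdivide DERIV_diff DERIV_cmult has_real_derivative_one_minus_powr assms)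
      (auto intro!: derivative_eq_intros)
  have z1: "1 - z \<noteq> 0" using assms by simp
  from D show ?thesis
    unfolding f key[OF z1] .
next
  case True
  have f: "gf_recip = (\<lambda>z. (2 * (1 - z) + (1 - z) * ln (1 - z)) / 2)"
    using True by (auto simp: gf_recip_def)
  have key: "(2 * (-1) + ((-1) * l + y * ((-1) / y))) / 2
      = -2 * p * ((2 * y + y * l) / 2) / y - (1 - p)" if "y \<noteq> 0" for y l :: real
    using that True by (simp add: field_simps)
  have D: "((\<lambda>z. (2 * (1 - z) + (1 - z) * ln (1 - z)) / 2) has_real_derivative
       (2 * (-1) + ((-1) * ln (1 - z) + (1 - z) * ((-1) / (1 - z)))) / 2) (at z)"
    using assms by (auto intro!: derivative_eq_intros)
  have z1: "1 - z \<noteq> 0" using assms by simp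
  from D show ?thesis
    unfolding f key[OF z1] .
qed

text \<open>Both \<open>1 / gf\<close> and \<open>gf_recip\<close> solve \<open>u' = -2 p u / (1 - z) - (1 - p)\<close>, so their
  difference times the integrating factor \<open>(1 - z) powr (-2 p)\<close> is constant.\<close>

lemma inverse_gf_eq_gf_recip: "\<exists>r>0. r \<le> 1/2 \<and> (\<forall>z. \<bar>z\<bar> < r \<longrightarrow> inverse (gf z) = gf_recip z)"
proof -
  obtain r where r: "r > 0" "r \<le> 1/2" "\<And>z. \<bar>z\<bar> < r \<Longrightarrow> gf z > 0"
    using gf_pos_near_0 by blast
  define W where "W x = (1 - x) powr (-2 * p) * (inverse (gf x) - gf_recip x)" for x
  have "(W has_real_derivative 0) (at x)" if x: "x \<in> {-r<..<r}" for x
  proof -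
    have x': "\<bar>x\<bar> < r" "\<bar>x\<bar> < 1/2" "x < 1" using x r by auto
    have ne: "gf x \<noteq> 0" "1 - x \<noteq> 0" using r(3)[OF x'(1)] x' by auto
    have "((\<lambda>x. inverse (gf x)) has_real_derivative
        - ((2 * p * gf x / (1 - x) + (1 - p) * gf x ^ 2) * inverse (gf x ^ Suc (Suc 0)))) (at x)"
      by (rule DERIV_inverse_fun[OF gf_riccati[OF x'(2)] ne(1)])
    moreover have "- ((2 * p * gf x / (1 - x) + (1 - p) * gf x ^ 2) * inverse (gf x ^ Suc (Suc 0)))
        = -2 * p * inverse (gf x) / (1 - x) - (1 - p)"
      using ne by (simp add: field_simps power2_eq_square)
    ultimately have "(W has_real_derivative
        ((1 - x) powr (-2 * p) * (- (-2 * p) / (1 - x))) * (inverse (gf x) - gf_recip x)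
        + ((-2 * p * inverse (gf x) / (1 - x) - (1 - p)) - (-2 * p * gf_recip x / (1 - x) - (1 - p)))
          * (1 - x) powr (-2 * p)) (at x)"
      unfolding W_def
      by (intro DERIV_mult has_real_derivative_one_minus_powr DERIV_diff gf_recip_deriv x'(3)) simp
    moreover have "(w * (- (-2 * p) / y)) * (u - t)
        + ((-2 * p * u / y - (1 - p)) - (-2 * p * t / y - (1 - p))) * w = 0" if "y \<noteq> 0" for y w u t :: real
      using that by (simp add: field_simps)
    ultimately show ?thesis using ne(2) by simp
  qed
  then have "W z = W 0" if "\<bar>z\<bar> < r" for z
    using that r by (intro DERIV_isconst3[of "-r" r z 0 W]) auto
  moreover have "W 0 = 0" using gf_0 gf_recip_0 by (simp add: W_def)
  moreover have "(1 - z) powr (-2 * p) > 0" if "\<bar>z\<bar> < r" for z using that r by simp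
  ultimately show ?thesis
    using r by (intro exI[of _ r]) (auto simp: W_def)
qed

lemma gf_closed_form:
  "\<exists>r>0. \<forall>z. \<bar>z\<bar> < r \<longrightarrow> (\<lambda>m. e m * z ^ m) sums
     (if p \<noteq> 1/2 then (1 - 2 * p) / ((1 - p) * (1 - z) - p * (1 - z) powr (2 * p))
      else 2 / (2 * (1 - z) - (1 - z) * ln (1 / (1 - z))))"
proof -
  obtain r where r: "r > 0" "r \<le> 1/2" "\<And>z. \<bar>z\<bar> < r \<Longrightarrow> inverse (gf z) = gf_recip z"
    using inverse_gf_eq_gf_recip by blast
  show ?thesis
  proof (intro exI conjI allI impI)
    fix z assume z: "\<bar>z\<bar> < r"
    have "(\<lambda>m. e m * z ^ m) sums gf z"
      unfolding gf_def using summable_e_power z r by (intro summable_sums) auto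
    moreover have "gf z = inverse (gf_recip z)" using r(3)[OF z] by (metis inverse_inverse_eq)
    moreover have "inverse (gf_recip z) = (if p \<noteq> 1/2
        then (1 - 2 * p) / ((1 - p) * (1 - z) - p * (1 - z) powr (2 * p))
        else 2 / (2 * (1 - z) - (1 - z) * ln (1 / (1 - z))))"
    proof (cases "p = 1/2")
      case True
      have "ln (1 / (1 - z)) = - ln (1 - z)" using z r by (simp add: ln_div)
      then show ?thesis using True by (simp add: gf_recip_def inverse_divide)
    qed (simp add: gf_recip_def inverse_divide)
    ultimately show "(\<lambda>m. e m * z ^ m) sums (if p \<noteq> 1/2
        then (1 - 2 * p) / ((1 - p) * (1 - z) - p * (1 - z) powr (2 * p))
        else 2 / (2 * (1 - z) - (1 - z) * ln (1 / (1 - z))))"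
      by simp
  qed (use r in simp)
qed

end

theorem mainTheorem4:
  fixes p :: real
  assumes "0 < p" and "p < 1"
  shows "EP p 1 = 1
    \<and> (\<forall>n\<ge>2. EP p n = 2 * p / real (n - 1) * (\<Sum>k=1..n-1. EP p k)
                    + (1 - p) / real (n - 1) * (\<Sum>k=1..n-1. EP p k * EP p (n - k)))
    \<and> (\<exists>r>0. \<forall>z::real. \<bar>z\<bar> < r \<longrightarrow>
          (\<lambda>m. EP p (m + 1) * z ^ m) sums
            (if p \<noteq> 1/2
             then (1 - 2 * p) / ((1 - p) * (1 - z) - p * (1 - z) powr (2 * p))
             else 2 / (2 * (1 - z) - (1 - z) * ln (1 / (1 - z)))))"
proof -
  have p: "0 \<le> p" "p \<le> 1" using assms by auto
  interpret quadratic_recurrence "\<lambda>k. EP p (Suc k)" p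
    using assms EP_1 EP_quadratic_recurrence[OF p] by unfold_locales auto
  show ?thesis
    using EP_1 EP_recurrence[OF p] gf_closed_form by auto
qed

end
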